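(* Let $a,b,c\ge 0$ and let $q:\mathbb R^M\to\mathbb R_+$ be a positive semidefinite quadratic form. Then the function $x\mapsto (a+b\,q(x))e^{-c\,q(x)}$ is log-concave on $\mathbb R^M$ whenever $ca\ge b$.
   Context: A function $f:\mathbb R^M\to\mathbb R_{\ge 0}$ is log-concave if $\log f$ is concave (with $\log 0=-\infty$). *)

theory Defs
  imports "HOL-Analysis.Analysis"
begin

text \<open>A function f : R^M -> R_{>=0} is log-concave if log f is concave, with log 0 = -infinity.
  Concavity of the extended-valued function log f means: for x, y where log f is finite
  (f x > 0, f y > 0) and 0 < t < 1, the value at the convex combination is finite
  and at least the convex combination of the values (points with value -infinity impose
  no constraint).\<close>
definition log_concave :: "('a::real_vector \<Rightarrow> real) \<Rightarrow> bool" where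
  "log_concave f \<longleftrightarrow>
     (\<forall>x. 0 \<le> f x) \<and>
     (\<forall>x y t. 0 < t \<longrightarrow> t < 1 \<longrightarrow> 0 < f x \<longrightarrow> 0 < f y \<longrightarrow>
        0 < f ((1 - t) *\<^sub>R x + t *\<^sub>R y) \<and>
        (1 - t) * ln (f x) + t * ln (f y) \<le> ln (f ((1 - t) *\<^sub>R x + t *\<^sub>R y)))"

end

theory Submission
  imports Defs
begin

text \<open>For \<open>a = 0\<close> also \<open>b = 0\<close> and the function vanishes. For \<open>a > 0\<close> the function
  is \<open>exp (g (q x))\<close> with \<open>g s = ln (a + b s) - c s\<close>. The function \<open>g\<close> is concave, and since
  \<open>g' s = b / (a + b s) - c \<le> b / a - c \<le> 0\<close> it is nonincreasing on \<open>[0, \<infinity>)\<close>.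
  A concave nonincreasing function of the convex function \<open>q\<close> is concave.\<close>

lemma convex_on_quadratic_form:
  fixes f :: "'a::real_inner \<Rightarrow> 'a"
  assumes "linear f" and psd: "\<And>x. 0 \<le> x \<bullet> f x"
  shows "convex_on UNIV (\<lambda>x. x \<bullet> f x)"
proof (rule convex_onI)
  fix t :: real and x y :: 'a
  assume t: "0 < t" "t < 1"
  interpret linear f by fact
  have "((1 - t) *\<^sub>R x + t *\<^sub>R y) \<bullet> f ((1 - t) *\<^sub>R x + t *\<^sub>R y)
    = (1 - t) * (x \<bullet> f x) + t * (y \<bullet> f y) - t * (1 - t) * ((x - y) \<bullet> f (x - y))"
    by (simp add: add scale diff inner_add_left inner_add_right inner_diff_left inner_diff_right
        algebra_simps)
  moreover have "0 \<le> t * (1 - t) * ((x - y) \<bullet> f (x - y))"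
    using psd t by simp
  ultimately show "((1 - t) *\<^sub>R x + t *\<^sub>R y) \<bullet> f ((1 - t) *\<^sub>R x + t *\<^sub>R y)
    \<le> (1 - t) * (x \<bullet> f x) + t * (y \<bullet> f y)"
    by linarith
qed simp

lemma concave_on_compose_convex_antimono:
  assumes "convex_on S q" "q ` S \<subseteq> T" "concave_on T g" "antimono_on T g"
  shows "concave_on S (\<lambda>x. g (q x))"
proof -
  have "convex T"
    using assms(3) by (rule concave_on_imp_convex)
  show ?thesis
    unfolding concave_on_iff
  proof (intro conjI ballI allI impI)
    show "convex S"
      using assms(1) by (rule convex_on_imp_convex)
  next
    fix x y and u v :: real
    assume xy: "x \<in> S" "y \<in> S" and uv: "0 \<le> u" "0 \<le> v" "u + v = 1"
    have qx: "q x \<in> T" and qy: "q y \<in> T"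
      using xy assms(2) by auto
    have mid: "u * q x + v * q y \<in> T"
      using convexD[OF \<open>convex T\<close> qx qy uv] by simp
    have "u * g (q x) + v * g (q y) \<le> g (u * q x + v * q y)"
      using assms(3) qx qy uv by (auto simp: concave_on_iff)
    also have "\<dots> \<le> g (q (u *\<^sub>R x + v *\<^sub>R y))"
    proof (rule monotone_onD[OF assms(4) _ mid])
      show "q (u *\<^sub>R x + v *\<^sub>R y) \<in> T"
        using convexD[OF convex_on_imp_convex[OF assms(1)] xy uv] assms(2) by auto
      show "q (u *\<^sub>R x + v *\<^sub>R y) \<le> u * q x + v * q y"
        using assms(1) xy uv by (auto simp: convex_on_def)
    qed
    finally show "u * g (q x) + v * g (q y) \<le> g (q (u *\<^sub>R x + v *\<^sub>R y))" .
  qed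
qed

lemma concave_on_ln_affine:
  fixes a b :: real
  assumes "0 < a" "0 \<le> b"
  shows "concave_on {0..} (\<lambda>s. ln (a + b * s))"
proof (rule concave_on_linorderI)
  fix t s1 s2 :: real
  assume "0 < t" "t < 1" "s1 \<in> {0..}" "s2 \<in> {0..}"
  then have "(1 - t) * ln (a + b * s1) + t * ln (a + b * s2)
      \<le> ln ((1 - t) *\<^sub>R (a + b * s1) + t *\<^sub>R (a + b * s2))"
    using assms by (intro concave_onD[OF ln_concave]) (auto intro: add_pos_nonneg)
  also have "(1 - t) *\<^sub>R (a + b * s1) + t *\<^sub>R (a + b * s2) = a + b * ((1 - t) *\<^sub>R s1 + t *\<^sub>R s2)"
    by (simp add: algebra_simps)
  finally show "(1 - t) * ln (a + b * s1) + t * ln (a + b * s2)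
      \<le> ln (a + b * ((1 - t) *\<^sub>R s1 + t *\<^sub>R s2))" .
qed (rule convex_real_interval)

lemma antimono_on_ln_affine_minus_linear:
  fixes a b c :: real
  assumes "0 < a" "0 \<le> b" "b \<le> c * a"
  shows "antimono_on {0..} (\<lambda>s. ln (a + b * s) - c * s)"
proof (rule monotone_onI)
  fix s1 s2 :: real
  assume "s1 \<in> {0..}" "s2 \<in> {0..}" and le: "s1 \<le> s2"
  then have p1: "0 < a + b * s1" and p2: "0 < a + b * s2"
    using assms by (auto intro: add_pos_nonneg)
  have "ln (a + b * s2) - ln (a + b * s1) = ln ((a + b * s2) / (a + b * s1))"
    using p1 p2 by (simp add: ln_div)
  also have "\<dots> \<le> (a + b * s2) / (a + b * s1) - 1"
    using p1 p2 by (intro ln_le_minus_one) simp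
  also have "\<dots> = b * (s2 - s1) / (a + b * s1)"
    using p1 by (simp add: field_simps)
  also have "\<dots> \<le> b * (s2 - s1) / a"
    using p1 \<open>s1 \<in> {0..}\<close> assms le by (intro divide_left_mono) auto
  also have "\<dots> \<le> c * a * (s2 - s1) / a"
    using assms le by (intro divide_right_mono mult_right_mono) auto
  also have "\<dots> = c * (s2 - s1)"
    using assms by simp
  finally show "ln (a + b * s2) - c * s2 \<le> ln (a + b * s1) - c * s1"
    by (simp add: algebra_simps)
qed

lemma log_concave_exp_concave:
  assumes "concave_on UNIV h"
  shows "log_concave (\<lambda>x. exp (h x))"
  using concave_onD[OF assms] by (auto simp: log_concave_def)

theorem lemma1:
  fixes A :: "real^'M^'M" and a b c :: real
  assumes "a \<ge> 0" and "b \<ge> 0" and "c \<ge> 0"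
    and psd: "\<forall>x. 0 \<le> x \<bullet> (A *v x)"
    and "c * a \<ge> b"
  shows "log_concave (\<lambda>x::real^'M. (a + b * (x \<bullet> (A *v x))) * exp (- c * (x \<bullet> (A *v x))))"
proof (cases "a = 0")
  case True
  then have "b = 0"
    using assms by simp
  with True show ?thesis
    by (simp add: log_concave_def)
next
  case False
  then have "0 < a"
    using assms by simp
  define q where "q = (\<lambda>x::real^'M. x \<bullet> (A *v x))"
  have q_nonneg: "0 \<le> q x" for x
    using psd by (simp add: q_def)
  have "concave_on UNIV (\<lambda>x. ln (a + b * q x) - c * q x)"
  proof (rule concave_on_compose_convex_antimono[where q = q and T = "{0..}"])
    show "convex_on UNIV q"
      unfolding q_def by (rule convex_on_quadratic_form) (simp_all add: psd)
    show "q ` UNIV \<subseteq> {0..}"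
      using q_nonneg by auto
    show "concave_on {0..} (\<lambda>s. ln (a + b * s) - c * s)"
      using \<open>0 < a\<close> \<open>b \<ge> 0\<close>
      by (intro concave_on_diff concave_on_ln_affine) (auto simp: convex_on_def algebra_simps)
    show "antimono_on {0..} (\<lambda>s. ln (a + b * s) - c * s)"
      using \<open>0 < a\<close> assms by (intro antimono_on_ln_affine_minus_linear) auto
  qed
  then have "log_concave (\<lambda>x. exp (ln (a + b * q x) - c * q x))"
    by (rule log_concave_exp_concave)
  moreover have "exp (ln (a + b * q x) - c * q x) = (a + b * q x) * exp (- c * q x)" for x
    using \<open>0 < a\<close> \<open>b \<ge> 0\<close> q_nonneg[of x] by (simp add: exp_diff exp_minus add_pos_nonneg field_simps)
  ultimately show ?thesis
    by (simp add: q_def)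
qed

end
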